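(* Let $\alpha>0$, $\beta,\eta,\kappa\in\mathbb{R}$, $\rho>0$, $p\geq 1$, and $0\le a<x$. Let $f,g$ be two positive functions on $[0,\infty)$ with $f,g\in X^{p}_{c}(a,x)$ (for some $c\in\mathbb{R}$), such that ${}^{\rho}\mathcal{I}^{\alpha,\beta}_{a+,\eta,\kappa}f^{p}(x)<\infty$ and ${}^{\rho}\mathcal{I}^{\alpha,\beta}_{a+,\eta,\kappa}g^{p}(x)<\infty$. If there are real numbers $m,M>0$ with $0<m\leq \frac{f(t)}{g(t)}\leq M$ for all $t\in[a,x]$, then $$\left({}^{\rho}\mathcal{I}^{\alpha,\beta}_{a+,\eta,\kappa}f^{p}(x)\right)^{1/p}+\left({}^{\rho}\mathcal{I}^{\alpha,\beta}_{a+,\eta,\kappa}g^{p}(x)\right)^{1/p}\leq c_{1}\left({}^{\rho}\mathcal{I}^{\alpha,\beta}_{a+,\eta,\kappa}(f+g)^{p}(x)\right)^{1/p},$$ where $c_{1}=\frac{M(m+1)+(M+1)}{(m+1)(M+1)}$.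
   Context: For $c\in\mathbb{R}$ and $1\le p<\infty$, $X^{p}_{c}(a,b)$ denotes the space of Lebesgue measurable functions $f$ on $(a,b)$ with $\left(\int_a^b |t^{c}f(t)|^{p}\,\frac{dt}{t}\right)^{1/p}<\infty$. For $\alpha>0$, $\beta,\eta,\kappa\in\mathbb{R}$, $\rho>0$, $0\le a<x$, and a function $\varphi$, the generalized (Katugampola) fractional integral is $${}^{\rho}\mathcal{I}^{\alpha,\beta}_{a+,\eta,\kappa}\varphi(x)=\frac{\rho^{1-\beta}x^{\kappa}}{\Gamma(\alpha)}\int_{a}^{x}\frac{\tau^{\rho(\eta+1)-1}}{(x^{\rho}-\tau^{\rho})^{1-\alpha}}\varphi(\tau)\,d\tau,$$ whenever the integral exists. Notation such as ${}^{\rho}\mathcal{I}^{\alpha,\beta}_{a+,\eta,\kappa}f^{p}(x)$ or ${}^{\rho}\mathcal{I}^{\alpha,\beta}_{a+,\eta,\kappa}(f+g)^{p}(x)$ means the operator applied to the function $\tau\mapsto f(\tau)^p$, resp. $\tau\mapsto (f(\tau)+g(\tau))^p$, evaluated at $x$. *)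

theory Defs
  imports "HOL-Analysis.Analysis"
begin

definition X_space :: "real \<Rightarrow> real \<Rightarrow> real \<Rightarrow> real \<Rightarrow> (real \<Rightarrow> real) \<Rightarrow> bool" where
  "X_space c p a b f \<longleftrightarrow>
     f \<in> borel_measurable (restrict_space lebesgue {a<..<b}) \<and>
     set_integrable lebesgue {a<..<b} (\<lambda>t. \<bar>t powr c * f t\<bar> powr p / t)"

definition katu_kernel :: "real \<Rightarrow> real \<Rightarrow> real \<Rightarrow> real \<Rightarrow> (real \<Rightarrow> real) \<Rightarrow> real \<Rightarrow> real" where
  "katu_kernel \<alpha> \<rho> \<eta> x \<phi> \<tau> =
     \<tau> powr (\<rho> * (\<eta> + 1) - 1) / (x powr \<rho> - \<tau> powr \<rho>) powr (1 - \<alpha>) * \<phi> \<tau>"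

definition katugampola_int ::
  "real \<Rightarrow> real \<Rightarrow> real \<Rightarrow> real \<Rightarrow> real \<Rightarrow> real \<Rightarrow> (real \<Rightarrow> real) \<Rightarrow> real \<Rightarrow> real" where
  "katugampola_int \<rho> \<alpha> \<beta> a \<eta> \<kappa> \<phi> x =
     \<rho> powr (1 - \<beta>) * x powr \<kappa> / Gamma \<alpha> *
     (\<integral>\<tau>\<in>{a<..<x}. katu_kernel \<alpha> \<rho> \<eta> x \<phi> \<tau> \<partial>lebesgue)"

end

theory Submission
  imports Defs
begin

text \<open>Since \<open>m \<le> f/g \<le> M\<close>, one has pointwise \<open>f \<le> M/(M+1) (f+g)\<close> and
  \<open>g \<le> 1/(m+1) (f+g)\<close>. The fractional integral has a nonnegative kernel, so it is
  monotone and positively homogeneous; hence \<open>(I f\<^sup>p)\<^sup>1\<^sup>/\<^sup>p \<le> M/(M+1) (I (f+g)\<^sup>p)\<^sup>1\<^sup>/\<^sup>p\<close>,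
  likewise for \<open>g\<close>, and adding gives the constant \<open>M/(M+1) + 1/(m+1) = c\<^sub>1\<close>.\<close>

lemma katu_kernel_nonneg:
  "\<phi> t \<ge> 0 \<Longrightarrow> katu_kernel \<alpha> \<rho> \<eta> x \<phi> t \<ge> 0"
  by (simp add: katu_kernel_def)

lemma katu_kernel_mono:
  "\<phi> t \<le> \<psi> t \<Longrightarrow> katu_kernel \<alpha> \<rho> \<eta> x \<phi> t \<le> katu_kernel \<alpha> \<rho> \<eta> x \<psi> t"
  unfolding katu_kernel_def by (intro mult_left_mono) auto

lemma katu_kernel_cmult:
  "katu_kernel \<alpha> \<rho> \<eta> x (\<lambda>t. c * \<phi> t) = (\<lambda>t. c * katu_kernel \<alpha> \<rho> \<eta> x \<phi> t)"
  by (auto simp: katu_kernel_def)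

lemma set_borel_measurable_katu_kernel:
  assumes [measurable]: "\<phi> \<in> borel_measurable (restrict_space lebesgue {a<..<x})"
  shows "set_borel_measurable lebesgue {a<..<x} (katu_kernel \<alpha> \<rho> \<eta> x \<phi>)"
proof -
  have [measurable]: "(\<lambda>t::real. t) \<in> borel_measurable (restrict_space lebesgue {a<..<x})"
    by (rule measurable_restrict_space1, rule measurable_completion) simp
  have "katu_kernel \<alpha> \<rho> \<eta> x \<phi> \<in> borel_measurable (restrict_space lebesgue {a<..<x})"
    unfolding katu_kernel_def by measurable
  then show ?thesis
    unfolding set_borel_measurable_def
    by (subst (asm) borel_measurable_restrict_space_iff) auto
qed

lemma set_integrable_katu_kernel_dominated:
  assumes "\<phi> \<in> borel_measurable (restrict_space lebesgue {a<..<x})"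
    and "set_integrable lebesgue {a<..<x} (katu_kernel \<alpha> \<rho> \<eta> x \<psi>)"
    and "\<And>t. t \<in> {a<..<x} \<Longrightarrow> 0 \<le> \<phi> t \<and> \<phi> t \<le> \<psi> t"
  shows "set_integrable lebesgue {a<..<x} (katu_kernel \<alpha> \<rho> \<eta> x \<phi>)"
proof (rule set_integrable_bound[OF assms(2) set_borel_measurable_katu_kernel[OF assms(1)]])
  show "AE t in lebesgue. t \<in> {a<..<x} \<longrightarrow>
      norm (katu_kernel \<alpha> \<rho> \<eta> x \<phi> t) \<le> norm (katu_kernel \<alpha> \<rho> \<eta> x \<psi> t)"
  proof (rule AE_I2, rule impI)
    fix t assume "t \<in> {a<..<x}"
    then have "0 \<le> katu_kernel \<alpha> \<rho> \<eta> x \<phi> t"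
        "katu_kernel \<alpha> \<rho> \<eta> x \<phi> t \<le> katu_kernel \<alpha> \<rho> \<eta> x \<psi> t"
      using assms(3) by (simp_all add: katu_kernel_nonneg katu_kernel_mono)
    then show "norm (katu_kernel \<alpha> \<rho> \<eta> x \<phi> t) \<le> norm (katu_kernel \<alpha> \<rho> \<eta> x \<psi> t)"
      by simp
  qed
qed

lemma katugampola_int_nonneg:
  assumes "\<alpha> > 0" and "\<And>t. t \<in> {a<..<x} \<Longrightarrow> \<phi> t \<ge> 0"
  shows "katugampola_int \<rho> \<alpha> \<beta> a \<eta> \<kappa> \<phi> x \<ge> 0"
proof -
  have "(\<integral>t\<in>{a<..<x}. katu_kernel \<alpha> \<rho> \<eta> x \<phi> t \<partial>lebesgue) \<ge> 0"
    unfolding set_lebesgue_integral_def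
    using assms(2) katu_kernel_nonneg[of \<phi>]
    by (intro Bochner_Integration.integral_nonneg) (simp add: indicator_def)
  then show ?thesis
    using \<open>\<alpha> > 0\<close> by (simp add: katugampola_int_def Gamma_real_pos less_imp_le)
qed

lemma katugampola_int_mono:
  assumes "\<alpha> > 0"
    and "set_integrable lebesgue {a<..<x} (katu_kernel \<alpha> \<rho> \<eta> x \<phi>)"
    and "set_integrable lebesgue {a<..<x} (katu_kernel \<alpha> \<rho> \<eta> x \<psi>)"
    and "\<And>t. t \<in> {a<..<x} \<Longrightarrow> \<phi> t \<le> \<psi> t"
  shows "katugampola_int \<rho> \<alpha> \<beta> a \<eta> \<kappa> \<phi> x \<le> katugampola_int \<rho> \<alpha> \<beta> a \<eta> \<kappa> \<psi> x"
proof -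
  have "(\<integral>t\<in>{a<..<x}. katu_kernel \<alpha> \<rho> \<eta> x \<phi> t \<partial>lebesgue)
      \<le> (\<integral>t\<in>{a<..<x}. katu_kernel \<alpha> \<rho> \<eta> x \<psi> t \<partial>lebesgue)"
    using assms(2-4) katu_kernel_mono by (intro set_integral_mono) auto
  then show ?thesis
    using \<open>\<alpha> > 0\<close> unfolding katugampola_int_def
    by (intro mult_left_mono) (auto simp: Gamma_real_pos less_imp_le)
qed

lemma katugampola_int_cmult:
  "katugampola_int \<rho> \<alpha> \<beta> a \<eta> \<kappa> (\<lambda>t. c * \<phi> t) x = c * katugampola_int \<rho> \<alpha> \<beta> a \<eta> \<kappa> \<phi> x"
  by (simp add: katugampola_int_def katu_kernel_cmult)

lemma powr_le_mult_powr:
  fixes h u A p :: real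
  assumes "0 \<le> h" "h \<le> A * u" "0 \<le> A" "0 \<le> u" "p > 0"
  shows "h powr p \<le> A powr p * u powr p"
proof -
  have "h powr p \<le> (A * u) powr p"
    using assms by (intro powr_mono2) auto
  also have "\<dots> = A powr p * u powr p"
    using assms by (simp add: powr_mult)
  finally show ?thesis .
qed

lemma set_integrable_katu_kernel_powr_dominated:
  assumes "h \<in> borel_measurable (restrict_space lebesgue {a<..<x})" "p > 0" "A \<ge> 0"
    and "set_integrable lebesgue {a<..<x} (katu_kernel \<alpha> \<rho> \<eta> x (\<lambda>t. u t powr p))"
    and "\<And>t. t \<in> {a<..<x} \<Longrightarrow> 0 \<le> h t \<and> h t \<le> A * u t \<and> 0 \<le> u t"
  shows "set_integrable lebesgue {a<..<x} (katu_kernel \<alpha> \<rho> \<eta> x (\<lambda>t. h t powr p))"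
proof (rule set_integrable_katu_kernel_dominated)
  show "(\<lambda>t. h t powr p) \<in> borel_measurable (restrict_space lebesgue {a<..<x})"
    using assms(1) by measurable
  show "set_integrable lebesgue {a<..<x} (katu_kernel \<alpha> \<rho> \<eta> x (\<lambda>t. A powr p * u t powr p))"
    using assms(4) by (simp add: katu_kernel_cmult)
  show "0 \<le> h t powr p \<and> h t powr p \<le> A powr p * u t powr p" if "t \<in> {a<..<x}" for t
    using assms(2,3) assms(5)[OF that] powr_le_mult_powr by auto
qed

lemma katugampola_int_powr_root_mono:
  assumes "\<alpha> > 0" "p > 0" "A \<ge> 0"
    and "set_integrable lebesgue {a<..<x} (katu_kernel \<alpha> \<rho> \<eta> x (\<lambda>t. h t powr p))"
    and "set_integrable lebesgue {a<..<x} (katu_kernel \<alpha> \<rho> \<eta> x (\<lambda>t. u t powr p))"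
    and bound: "\<And>t. t \<in> {a<..<x} \<Longrightarrow> 0 \<le> h t \<and> h t \<le> A * u t \<and> 0 \<le> u t"
  shows "katugampola_int \<rho> \<alpha> \<beta> a \<eta> \<kappa> (\<lambda>t. h t powr p) x powr (1/p)
    \<le> A * katugampola_int \<rho> \<alpha> \<beta> a \<eta> \<kappa> (\<lambda>t. u t powr p) x powr (1/p)"
proof -
  define K where "K = katugampola_int \<rho> \<alpha> \<beta> a \<eta> \<kappa> (\<lambda>t. u t powr p) x"
  have "K \<ge> 0"
    unfolding K_def using \<open>\<alpha> > 0\<close> by (intro katugampola_int_nonneg) auto
  have "katugampola_int \<rho> \<alpha> \<beta> a \<eta> \<kappa> (\<lambda>t. h t powr p) x
      \<le> katugampola_int \<rho> \<alpha> \<beta> a \<eta> \<kappa> (\<lambda>t. A powr p * u t powr p) x"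
  proof (rule katugampola_int_mono[OF \<open>\<alpha> > 0\<close> assms(4)])
    show "set_integrable lebesgue {a<..<x} (katu_kernel \<alpha> \<rho> \<eta> x (\<lambda>t. A powr p * u t powr p))"
      using assms(5) by (simp add: katu_kernel_cmult)
    show "h t powr p \<le> A powr p * u t powr p" if "t \<in> {a<..<x}" for t
      using bound[OF that] assms(2,3) powr_le_mult_powr by auto
  qed
  also have "\<dots> = A powr p * K"
    unfolding K_def by (rule katugampola_int_cmult)
  finally have "katugampola_int \<rho> \<alpha> \<beta> a \<eta> \<kappa> (\<lambda>t. h t powr p) x powr (1/p)
      \<le> (A powr p * K) powr (1/p)"
    using \<open>p > 0\<close> katugampola_int_nonneg[OF \<open>\<alpha> > 0\<close>, of a x "\<lambda>t. h t powr p"]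
    by (intro powr_mono2) auto
  also have "\<dots> = A * K powr (1/p)"
    using \<open>A \<ge> 0\<close> \<open>K \<ge> 0\<close> \<open>p > 0\<close> by (simp add: powr_mult powr_powr)
  finally show ?thesis unfolding K_def .
qed

lemma sum_bounds_of_ratio_bounds:
  fixes f g m M :: real
  assumes "0 < g" "0 < m" "0 < M" "m \<le> f / g" "f / g \<le> M"
  shows "f \<le> M / (M + 1) * (f + g)" "g \<le> 1 / (m + 1) * (f + g)" "f + g \<le> (m + 1) / m * f"
proof -
  have "m * g \<le> f" "f \<le> M * g"
    using assms by (simp_all add: pos_le_divide_eq pos_divide_le_eq)
  then show "f \<le> M / (M + 1) * (f + g)" "g \<le> 1 / (m + 1) * (f + g)" "f + g \<le> (m + 1) / m * f"
    using assms(2,3) by (simp_all add: field_simps)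
qed

theorem theorem8:
  fixes \<alpha> \<beta> \<eta> \<kappa> \<rho> p a x c m M :: real and f g :: "real \<Rightarrow> real"
  assumes "\<alpha> > 0" "\<rho> > 0" "p \<ge> 1" "0 \<le> a" "a < x"
    and fpos: "\<And>t. t \<ge> 0 \<Longrightarrow> f t > 0"
    and gpos: "\<And>t. t \<ge> 0 \<Longrightarrow> g t > 0"
    and "X_space c p a x f" "X_space c p a x g"
    and "set_integrable lebesgue {a<..<x} (katu_kernel \<alpha> \<rho> \<eta> x (\<lambda>t. f t powr p))"
    and "set_integrable lebesgue {a<..<x} (katu_kernel \<alpha> \<rho> \<eta> x (\<lambda>t. g t powr p))"
    and "m > 0" "M > 0"
    and "\<And>t. t \<in> {a..x} \<Longrightarrow> m \<le> f t / g t \<and> f t / g t \<le> M"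
  shows "katugampola_int \<rho> \<alpha> \<beta> a \<eta> \<kappa> (\<lambda>t. f t powr p) x powr (1/p)
       + katugampola_int \<rho> \<alpha> \<beta> a \<eta> \<kappa> (\<lambda>t. g t powr p) x powr (1/p)
       \<le> (M * (m + 1) + (M + 1)) / ((m + 1) * (M + 1))
         * katugampola_int \<rho> \<alpha> \<beta> a \<eta> \<kappa> (\<lambda>t. (f t + g t) powr p) x powr (1/p)"
proof -
  have [measurable]: "f \<in> borel_measurable (restrict_space lebesgue {a<..<x})"
      "g \<in> borel_measurable (restrict_space lebesgue {a<..<x})"
    using \<open>X_space c p a x f\<close> \<open>X_space c p a x g\<close> by (simp_all add: X_space_def)
  have "p > 0" using \<open>p \<ge> 1\<close> by simp
  have bounds: "0 < f t" "0 < g t" "f t \<le> M / (M + 1) * (f t + g t)"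
    "g t \<le> 1 / (m + 1) * (f t + g t)" "f t + g t \<le> (m + 1) / m * f t"
    if "t \<in> {a<..<x}" for t
    using that fpos[of t] gpos[of t] \<open>0 \<le> a\<close> assms(12,13) assms(14)[of t]
      sum_bounds_of_ratio_bounds[of "g t" m M "f t"] by auto
  have sum_integrable:
    "set_integrable lebesgue {a<..<x} (katu_kernel \<alpha> \<rho> \<eta> x (\<lambda>t. (f t + g t) powr p))"
    using \<open>m > 0\<close> bounds
    by (intro set_integrable_katu_kernel_powr_dominated[OF _ \<open>p > 0\<close> _ assms(10),
        where A = "(m + 1) / m"]) (auto intro: less_imp_le add_nonneg_nonneg)
  have "katugampola_int \<rho> \<alpha> \<beta> a \<eta> \<kappa> (\<lambda>t. f t powr p) x powr (1/p)
      \<le> M / (M + 1) * katugampola_int \<rho> \<alpha> \<beta> a \<eta> \<kappa> (\<lambda>t. (f t + g t) powr p) x powr (1/p)"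
    using \<open>M > 0\<close> bounds
    by (intro katugampola_int_powr_root_mono[OF \<open>\<alpha> > 0\<close> \<open>p > 0\<close> _ assms(10) sum_integrable])
      (auto intro: less_imp_le add_nonneg_nonneg)
  moreover have "katugampola_int \<rho> \<alpha> \<beta> a \<eta> \<kappa> (\<lambda>t. g t powr p) x powr (1/p)
      \<le> 1 / (m + 1) * katugampola_int \<rho> \<alpha> \<beta> a \<eta> \<kappa> (\<lambda>t. (f t + g t) powr p) x powr (1/p)"
    using \<open>m > 0\<close> bounds
    by (intro katugampola_int_powr_root_mono[OF \<open>\<alpha> > 0\<close> \<open>p > 0\<close> _ assms(11) sum_integrable])
      (auto intro: less_imp_le add_nonneg_nonneg)
  moreover have "(M * (m + 1) + (M + 1)) / ((m + 1) * (M + 1)) = M / (M + 1) + 1 / (m + 1)"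
    using \<open>m > 0\<close> \<open>M > 0\<close> by (simp add: field_simps)
  ultimately show ?thesis by (simp add: distrib_right)
qed

end
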